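(* Let $\Phi$ be a linear map between finite-dimensional matrix spaces, represented by coefficients $\Phi^{b,d}_{a,c}$ via $\Phi(|b\rangle\langle d|)=\sum_{a,c}\Phi^{b,d}_{a,c}|a\rangle\langle c|$ in the incoherent bases. Then $\Phi$ is completely positive iff there are matrices $K_n$ with entries $K_{n_{a,b}}$ such that $\Phi^{b,d}_{a,c}=\sum_n K_{n_{a,b}}K^*_{n_{c,d}}$ for all $a,b,c,d$. Under this condition: (1) $\Phi$ is a detection-incoherent quantum operation iff there is a conditional probability distribution $p(a|b)$ (i.e. $p(a|b)\ge0$, $\sum_a p(a|b)=1$) with $\Phi^{b,d}_{a,a}=p(a|b)\delta_{b,d}$ for all $a,b,d$; (2) $\Phi$ is a creation-incoherent quantum operation iff there is a conditional probability distribution $p(b|a)$ with $\Phi^{a,a}_{b,c}=p(b|a)\delta_{b,c}$ for all $a,b,c$, and $\sum_a\Phi^{b,d}_{a,a}=\delta_{b,d}$ for all $b,d$; (3) $\Phi$ is a detection-creation-incoherent quantum operation iff there are conditional probability distributions with $\Phi^{b,d}_{a,a}=p(a|b)\delta_{b,d}$ for all $a,b,d$ and $\Phi^{a,a}_{b,c}=p(b|a)\delta_{b,c}$ for all $a,b,c$.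
   Context: Every finite-dimensional system carries a fixed orthonormal incoherent basis $\{|i\rangle\}$; the total dephasing map is $\Delta(\rho)=\sum_i|i\rangle\langle i|\rho|i\rangle\langle i|$. A quantum operation is a completely positive trace-preserving linear map. $\Phi$ is detection-incoherent iff $\Delta\Phi=\Delta\Phi\Delta$, creation-incoherent iff $\Phi\Delta=\Delta\Phi\Delta$, and detection-creation-incoherent iff $\Delta\Phi=\Phi\Delta$. *)

theory Defs
  imports "Jordan_Normal_Form.Matrix"
begin

text \<open>Matrices are Jordan_Normal_Form matrices; the incoherent basis is the standard basis.
  A map Phi from m x m to n x n complex matrices is a function on complex mat; only its
  behaviour on carrier_mat m m matters.\<close>

definition ket_bra :: "nat \<Rightarrow> nat \<Rightarrow> nat \<Rightarrow> complex mat" where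
  "ket_bra m b d = mat m m (\<lambda>(i,j). if i = b \<and> j = d then 1 else 0)"

text \<open>coeff m Phi b d a c is Phi^{b,d}_{a,c}, i.e. the (a,c) entry of Phi(|b><d|).\<close>
definition coeff :: "nat \<Rightarrow> (complex mat \<Rightarrow> complex mat) \<Rightarrow> nat \<Rightarrow> nat \<Rightarrow> nat \<Rightarrow> nat \<Rightarrow> complex" where
  "coeff m \<Phi> b d a c = \<Phi> (ket_bra m b d) $$ (a, c)"

definition linear_map_mat :: "nat \<Rightarrow> nat \<Rightarrow> (complex mat \<Rightarrow> complex mat) \<Rightarrow> bool" where
  "linear_map_mat m n \<Phi> \<longleftrightarrow>
     (\<forall>A \<in> carrier_mat m m. \<Phi> A \<in> carrier_mat n n) \<and>
     (\<forall>A \<in> carrier_mat m m. \<forall>B \<in> carrier_mat m m. \<Phi> (A + B) = \<Phi> A + \<Phi> B) \<and>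
     (\<forall>A \<in> carrier_mat m m. \<forall>x. \<Phi> (x \<cdot>\<^sub>m A) = x \<cdot>\<^sub>m \<Phi> A)"

definition psd :: "nat \<Rightarrow> complex mat \<Rightarrow> bool" where
  "psd k A \<longleftrightarrow> A \<in> carrier_mat k k \<and> (\<forall>v \<in> carrier_vec k. (A *\<^sub>v v) \<bullet>c v \<ge> 0)"

text \<open>The ampliation id_k \<otimes> Phi acting on M_k(M_m) = M_{km}, in block form:
  block (i,j) of the result is Phi applied to block (i,j) of the argument.\<close>
definition ampliation :: "nat \<Rightarrow> nat \<Rightarrow> nat \<Rightarrow> (complex mat \<Rightarrow> complex mat) \<Rightarrow> complex mat \<Rightarrow> complex mat" where
  "ampliation k m n \<Phi> X = mat (k * n) (k * n) (\<lambda>(p, q).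
      \<Phi> (mat m m (\<lambda>(b, d). X $$ ((p div n) * m + b, (q div n) * m + d))) $$ (p mod n, q mod n))"

definition completely_positive :: "nat \<Rightarrow> nat \<Rightarrow> (complex mat \<Rightarrow> complex mat) \<Rightarrow> bool" where
  "completely_positive m n \<Phi> \<longleftrightarrow>
     (\<forall>k. \<forall>X. psd (k * m) X \<longrightarrow> psd (k * n) (ampliation k m n \<Phi> X))"

definition mtrace :: "complex mat \<Rightarrow> complex" where
  "mtrace A = (\<Sum>i < dim_row A. A $$ (i, i))"

definition trace_preserving :: "nat \<Rightarrow> (complex mat \<Rightarrow> complex mat) \<Rightarrow> bool" where
  "trace_preserving m \<Phi> \<longleftrightarrow> (\<forall>A \<in> carrier_mat m m. mtrace (\<Phi> A) = mtrace A)"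

definition quantum_operation :: "nat \<Rightarrow> nat \<Rightarrow> (complex mat \<Rightarrow> complex mat) \<Rightarrow> bool" where
  "quantum_operation m n \<Phi> \<longleftrightarrow>
     linear_map_mat m n \<Phi> \<and> completely_positive m n \<Phi> \<and> trace_preserving m \<Phi>"

definition dephase :: "complex mat \<Rightarrow> complex mat" where
  "dephase A = mat (dim_row A) (dim_col A) (\<lambda>(i, j). if i = j then A $$ (i, j) else 0)"

definition detection_incoherent :: "nat \<Rightarrow> (complex mat \<Rightarrow> complex mat) \<Rightarrow> bool" where
  "detection_incoherent m \<Phi> \<longleftrightarrow>
     (\<forall>A \<in> carrier_mat m m. dephase (\<Phi> A) = dephase (\<Phi> (dephase A)))"

definition creation_incoherent :: "nat \<Rightarrow> (complex mat \<Rightarrow> complex mat) \<Rightarrow> bool" where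
  "creation_incoherent m \<Phi> \<longleftrightarrow>
     (\<forall>A \<in> carrier_mat m m. \<Phi> (dephase A) = dephase (\<Phi> (dephase A)))"

definition detection_creation_incoherent :: "nat \<Rightarrow> (complex mat \<Rightarrow> complex mat) \<Rightarrow> bool" where
  "detection_creation_incoherent m \<Phi> \<longleftrightarrow>
     (\<forall>A \<in> carrier_mat m m. dephase (\<Phi> A) = \<Phi> (dephase A))"

text \<open>cond_prob n m p: p x y = p(x|y) is a conditional distribution on outcomes x < n given y < m.\<close>
definition cond_prob :: "nat \<Rightarrow> nat \<Rightarrow> (nat \<Rightarrow> nat \<Rightarrow> real) \<Rightarrow> bool" where
  "cond_prob n m p \<longleftrightarrow> (\<forall>x < n. \<forall>y < m. p x y \<ge> 0) \<and> (\<forall>y < m. (\<Sum>x < n. p x y) = 1)"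

end

theory Submission
  imports Defs
begin

text \<open>Complete positivity is decided by the Choi matrix, the ampliation of \<open>\<Phi>\<close> applied to
  the maximally entangled projector, whose entries are exactly the coefficients of \<open>\<Phi>\<close>.
  A positive semidefinite matrix is a Gram matrix (peel off one rank-one term per Schur
  complement), and the Gram vectors of the Choi matrix are the Kraus operators. Conversely, a
  Kraus form writes every ampliation as a sum of congruences \<open>X \<mapsto> B X B\<^sup>*\<close>, which preserve
  positivity.

  The dephasing conditions are linear, so tested on the matrix units \<open>|b\<rangle>\<langle>d|\<close> they say
  that certain coefficients vanish; trace preservation then turns the diagonal coefficients
  \<open>\<Phi>(|b\<rangle>\<langle>b|)\<^sub>a\<^sub>a\<close>, nonnegative for a completely positive map, into conditional
  probabilities.\<close>

section \<open>Positive semidefinite kernels\<close>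

text \<open>Positive semidefiniteness is developed for entry functions rather than for
  \<open>complex mat\<close>, which avoids carrier bookkeeping in the Gram decomposition.\<close>

definition quad_form :: "nat \<Rightarrow> (nat \<Rightarrow> nat \<Rightarrow> complex) \<Rightarrow> (nat \<Rightarrow> complex) \<Rightarrow> complex" where
  "quad_form N C v = (\<Sum>i<N. \<Sum>j<N. cnj (v i) * C i j * v j)"

definition psd_kernel :: "nat \<Rightarrow> (nat \<Rightarrow> nat \<Rightarrow> complex) \<Rightarrow> bool" where
  "psd_kernel N C \<longleftrightarrow> (\<forall>v. 0 \<le> quad_form N C v)"

lemma quad_form_cong:
  assumes "\<And>i j. i < N \<Longrightarrow> j < N \<Longrightarrow> C i j = D i j"
  shows "quad_form N C v = quad_form N D v"
  using assms unfolding quad_form_def by (intro sum.cong refl) auto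

lemma psd_kernel_cong:
  assumes "psd_kernel N C" and "\<And>i j. i < N \<Longrightarrow> j < N \<Longrightarrow> C i j = D i j"
  shows "psd_kernel N D"
  using assms quad_form_cong unfolding psd_kernel_def by metis

lemma quad_form_supported:
  assumes "T \<subseteq> {..<N}" and "\<And>k. k \<notin> T \<Longrightarrow> v k = 0"
  shows "quad_form N C v = (\<Sum>i\<in>T. \<Sum>j\<in>T. cnj (v i) * C i j * v j)"
proof -
  have "quad_form N C v = (\<Sum>i<N. \<Sum>j\<in>T. cnj (v i) * C i j * v j)"
    unfolding quad_form_def using assms by (intro sum.cong refl sum.mono_neutral_right) auto
  also have "\<dots> = (\<Sum>i\<in>T. \<Sum>j\<in>T. cnj (v i) * C i j * v j)"
    using assms by (intro sum.mono_neutral_right) auto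
  finally show ?thesis .
qed

lemma quad_form_single:
  assumes "s < N"
  shows "quad_form N C (\<lambda>k. if k = s then x else 0) = cnj x * C s s * x"
  using assms by (subst quad_form_supported[of "{s}"]) auto

lemma quad_form_pair:
  assumes "s < N" "t < N" "s \<noteq> t"
  shows "quad_form N C (\<lambda>k. if k = s then x else if k = t then y else 0)
    = cnj x * C s s * x + cnj x * C s t * y + cnj y * C t s * x + cnj y * C t t * y"
  using assms by (subst quad_form_supported[of "{s, t}"]) auto

lemma quad_form_sum:
  "quad_form N (\<lambda>p q. \<Sum>i<r. C i p q) v = (\<Sum>i<r. quad_form N (C i) v)"
  unfolding quad_form_def by (simp add: sum_distrib_left sum_distrib_right sum.swap[of _ "{..<r}"])

lemma quad_form_rank_one:
  "quad_form N (\<lambda>i j. w i * cnj (w j)) v = cnj (\<Sum>i<N. cnj (w i) * v i) * (\<Sum>j<N. cnj (w j) * v j)"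
  unfolding quad_form_def cnj_sum sum_product by (intro sum.cong refl) (simp add: mult_ac)

lemma quad_form_congruence:
  "quad_form N (\<lambda>p q. \<Sum>P<M. \<Sum>Q<M. B p P * X P Q * cnj (B q Q)) v
    = quad_form M X (\<lambda>P. \<Sum>p<N. cnj (B p P) * v p)"
proof -
  define F where "F p q P Q = cnj (v p) * B p P * X P Q * cnj (B q Q) * v q" for p q P Q
  have "quad_form N (\<lambda>p q. \<Sum>P<M. \<Sum>Q<M. B p P * X P Q * cnj (B q Q)) v
      = (\<Sum>p<N. \<Sum>q<N. \<Sum>P<M. \<Sum>Q<M. F p q P Q)"
    unfolding quad_form_def F_def by (simp add: sum_distrib_left sum_distrib_right mult.assoc)
  also have "\<dots> = (\<Sum>p<N. \<Sum>P<M. \<Sum>q<N. \<Sum>Q<M. F p q P Q)"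
    by (intro sum.cong refl sum.swap)
  also have "\<dots> = (\<Sum>P<M. \<Sum>p<N. \<Sum>Q<M. \<Sum>q<N. F p q P Q)"
    by (subst sum.swap) (intro sum.cong refl sum.swap)
  also have "\<dots> = (\<Sum>P<M. \<Sum>Q<M. \<Sum>p<N. \<Sum>q<N. F p q P Q)"
    by (intro sum.cong refl sum.swap)
  also have "\<dots> = (\<Sum>P<M. \<Sum>Q<M. (\<Sum>p<N. B p P * cnj (v p)) * X P Q * (\<Sum>q<N. cnj (B q Q) * v q))"
    unfolding F_def sum_distrib_right sum_product by (intro sum.cong refl) (simp add: sum_distrib_left mult_ac)
  also have "\<dots> = quad_form M X (\<lambda>P. \<Sum>p<N. cnj (B p P) * v p)"
    unfolding quad_form_def by (simp add: cnj_sum)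
  finally show ?thesis .
qed

lemma cnj_mult_self_nonneg: "0 \<le> cnj z * z"
  by (simp add: less_eq_complex_def)

lemma psd_kernel_rank_one: "psd_kernel N (\<lambda>i j. w i * cnj (w j))"
  using cnj_mult_self_nonneg unfolding psd_kernel_def quad_form_rank_one by blast

lemma psd_kernel_diag_nonneg:
  assumes "psd_kernel N C" "s < N"
  shows "0 \<le> C s s"
proof -
  have "0 \<le> quad_form N C (\<lambda>k. if k = s then 1 else 0)"
    using assms(1) unfolding psd_kernel_def by blast
  then show ?thesis using quad_form_single[OF assms(2), of C 1] by simp
qed

lemma psd_kernel_hermitian:
  assumes C: "psd_kernel N C" and ij: "i < N" "j < N"
  shows "C i j = cnj (C j i)"
proof (cases "i = j")
  case True
  then show ?thesis
    using psd_kernel_diag_nonneg[OF C ij(1)] by (simp add: less_eq_complex_def complex_eq_iff)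
next
  case False
  have test: "0 \<le> quad_form N C (\<lambda>k. if k = i then 1 else if k = j then y else 0)" for y
    using C unfolding psd_kernel_def by blast
  have "Im (C i i) = 0" "Im (C j j) = 0"
    using psd_kernel_diag_nonneg[OF C] ij by (auto simp: less_eq_complex_def)
  moreover have "Im (C i i + C i j + C j i + C j j) = 0"
    using test[of 1] unfolding quad_form_pair[OF ij False] by (simp add: less_eq_complex_def)
  moreover have "Im (C i i + \<i> * C i j - \<i> * C j i + C j j) = 0"
    using test[of \<i>] unfolding quad_form_pair[OF ij False] by (simp add: less_eq_complex_def algebra_simps)
  ultimately show ?thesis by (simp add: complex_eq_iff)
qed

lemma psd_kernel_zero_diag_row:
  assumes C: "psd_kernel N C" and s: "s < N" and j: "j < N" and Css: "C s s = 0"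
  shows "C s j = 0"
proof (rule ccontr)
  assume "C s j \<noteq> 0"
  then have sj: "s \<noteq> j" and pos: "(cmod (C s j))\<^sup>2 > 0" using Css by auto
  define x where "x = (Re (C j j) + 1) / (2 * (cmod (C s j))\<^sup>2)"
  define t where "t = - complex_of_real x * C s j"
  have "0 \<le> quad_form N C (\<lambda>k. if k = s then t else if k = j then 1 else 0)"
    using C unfolding psd_kernel_def by blast
  then have "0 \<le> Re (cnj t * C s j + cnj (C s j) * t + C j j)"
    using quad_form_pair[OF s j sj, of C t 1] psd_kernel_hermitian[OF C j s] Css
    by (simp add: less_eq_complex_def)
  also have "Re (cnj t * C s j + cnj (C s j) * t + C j j) = Re (C j j) - 2 * x * (cmod (C s j))\<^sup>2"
    unfolding t_def cmod_power2 by (simp add: algebra_simps power2_eq_square)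
  also have "\<dots> = -1"
    unfolding x_def using pos by (simp add: field_simps)
  finally show False by simp
qed

text \<open>If \<open>C s s = 0\<close>, division by zero makes the Schur complement equal to \<open>C\<close> and the
  Gram vector \<open>g\<close> below zero; as row \<open>s\<close> of \<open>C\<close> then vanishes, no case split is needed.\<close>

definition schur_complement :: "(nat \<Rightarrow> nat \<Rightarrow> complex) \<Rightarrow> nat \<Rightarrow> nat \<Rightarrow> nat \<Rightarrow> complex" where
  "schur_complement C s i j = C i j - C i s * C s j / C s s"

lemma schur_complement_row:
  assumes "psd_kernel N C" "s < N" "j < N"
  shows "schur_complement C s s j = 0"
  using psd_kernel_zero_diag_row[OF assms] unfolding schur_complement_def by (cases "C s s = 0") auto

lemma psd_kernel_schur_complement:
  assumes C: "psd_kernel N C" and s: "s < N"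
  shows "psd_kernel N (schur_complement C s)"
proof (cases "C s s = 0")
  case True
  then have "schur_complement C s = C" by (simp add: schur_complement_def fun_eq_iff)
  then show ?thesis using C by simp
next
  case False
  show ?thesis unfolding psd_kernel_def
  proof
    fix v
    define u where "u k = v k - (if k = s then (\<Sum>j<N. C s j * v j) / C s s else 0)" for k
    have u_orth: "(\<Sum>j<N. C s j * u j) = 0"
      using s False by (simp add: u_def algebra_simps sum_subtractf if_distrib[of "\<lambda>x. _ * x"] cong: if_cong)
    have "quad_form N (schur_complement C s) v = quad_form N (schur_complement C s) u"
      unfolding quad_form_def using False
      by (intro sum.cong refl) (auto simp: u_def schur_complement_def)
    also have "\<dots> = quad_form N C u
        - (\<Sum>i<N. cnj (u i) * C i s) * (\<Sum>j<N. C s j * u j) / C s s"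
      unfolding quad_form_def schur_complement_def sum_product
      by (simp add: sum_subtractf sum_divide_distrib algebra_simps)
    finally show "0 \<le> quad_form N (schur_complement C s) v"
      using C unfolding psd_kernel_def u_orth by simp
  qed
qed

lemma schur_complement_rank_one:
  assumes C: "psd_kernel N C" and "s < N" "i < N" "j < N"
  defines "g \<equiv> \<lambda>k. C k s / complex_of_real (sqrt (Re (C s s)))"
  shows "C i j = schur_complement C s i j + g i * cnj (g j)"
proof -
  have "0 \<le> C s s" using psd_kernel_diag_nonneg[OF C \<open>s < N\<close>] .
  then have "complex_of_real (sqrt (Re (C s s))) * complex_of_real (sqrt (Re (C s s))) = C s s"
    by (simp flip: of_real_mult add: less_eq_complex_def complex_eq_iff)
  moreover have "C s j = cnj (C j s)" using psd_kernel_hermitian[OF C] assms by blast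
  ultimately have "g i * cnj (g j) = C i s * C s j / C s s"
    unfolding g_def by simp
  then show ?thesis unfolding schur_complement_def by simp
qed

lemma psd_kernel_gram_supported:
  assumes "finite S" "psd_kernel N C" "\<And>i j. i < N \<Longrightarrow> j < N \<Longrightarrow> i \<notin> S \<Longrightarrow> C i j = 0"
  shows "\<exists>(r::nat) w. \<forall>i<N. \<forall>j<N. C i j = (\<Sum>k<r. w k i * cnj (w k j))"
  using assms
proof (induction S arbitrary: C rule: finite_induct)
  case empty
  then show ?case by (intro exI[of _ 0]) auto
next
  case (insert s F)
  show ?case
  proof (cases "s < N")
    case False
    then show ?thesis using insert.IH insert.prems by blast
  next
    case True
    define D where "D = schur_complement C s"
    have "psd_kernel N D"
      unfolding D_def using psd_kernel_schur_complement insert.prems(1) True .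
    moreover have "D i j = 0" if "i < N" "j < N" "i \<notin> F" for i j
    proof (cases "i = s")
      case True
      then show ?thesis using schur_complement_row insert.prems(1) \<open>s < N\<close> that unfolding D_def by blast
    next
      case False
      then show ?thesis
        using insert.prems(2)[of i j] insert.prems(2)[of i s] that \<open>s < N\<close>
        unfolding D_def schur_complement_def by simp
    qed
    ultimately obtain r :: nat and w where w: "\<forall>i<N. \<forall>j<N. D i j = (\<Sum>k<r. w k i * cnj (w k j))"
      using insert.IH by blast
    define g where "g k = C k s / complex_of_real (sqrt (Re (C s s)))" for k
    have "C i j = (\<Sum>k<Suc r. (w(r := g)) k i * cnj ((w(r := g)) k j))" if "i < N" "j < N" for i j
      using schur_complement_rank_one[OF insert.prems(1) True that] w that
      unfolding D_def g_def by simp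
    then show ?thesis by blast
  qed
qed

lemma psd_kernel_gram:
  assumes "psd_kernel N C"
  shows "\<exists>(r::nat) w. \<forall>i<N. \<forall>j<N. C i j = (\<Sum>k<r. w k i * cnj (w k j))"
  using psd_kernel_gram_supported[of "{..<N}"] assms by auto

lemma psd_iff_psd_kernel:
  assumes A: "A \<in> carrier_mat N N"
  shows "psd N A \<longleftrightarrow> psd_kernel N (\<lambda>i j. A $$ (i, j))"
proof -
  have form: "(A *\<^sub>v vec N v) \<bullet>c vec N v = quad_form N (\<lambda>i j. A $$ (i, j)) v" for v
    using A unfolding quad_form_def scalar_prod_def mult_mat_vec_def
    by (auto simp: sum_distrib_left sum_distrib_right atLeast0LessThan mult_ac intro!: sum.cong)
  have "vec N (\<lambda>i. x $ i) = x" if "x \<in> carrier_vec N" for x :: "complex vec"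
    using that by (intro eq_vecI) auto
  then have "(\<forall>x\<in>carrier_vec N. 0 \<le> (A *\<^sub>v x) \<bullet>c x) \<longleftrightarrow> (\<forall>v. 0 \<le> (A *\<^sub>v vec N v) \<bullet>c vec N v)"
    by (metis vec_carrier)
  then show ?thesis unfolding psd_def psd_kernel_def form using A by simp
qed

section \<open>Linear maps in the basis of matrix units\<close>

lemma ket_bra_carrier [simp]: "ket_bra m b d \<in> carrier_mat m m"
  unfolding ket_bra_def by simp

lemma ket_bra_dims [simp]: "dim_row (ket_bra m b d) = m" "dim_col (ket_bra m b d) = m"
  unfolding ket_bra_def by simp_all

lemma ket_bra_index [simp]:
  "i < m \<Longrightarrow> j < m \<Longrightarrow> ket_bra m b d $$ (i, j) = (if i = b \<and> j = d then 1 else 0)"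
  unfolding ket_bra_def by simp

lemma dephase_carrier [simp]: "A \<in> carrier_mat k l \<Longrightarrow> dephase A \<in> carrier_mat k l"
  unfolding dephase_def by auto

lemma dephase_dims [simp]: "dim_row (dephase A) = dim_row A" "dim_col (dephase A) = dim_col A"
  unfolding dephase_def by simp_all

lemma dephase_index [simp]:
  "i < dim_row A \<Longrightarrow> j < dim_col A \<Longrightarrow> dephase A $$ (i, j) = (if i = j then A $$ (i, j) else 0)"
  unfolding dephase_def by simp

lemma dephase_idem [simp]: "dephase (dephase A) = dephase A"
  by (rule eq_matI) (auto simp: dephase_def)

lemma linear_map_mat_carrier:
  "linear_map_mat m n \<Phi> \<Longrightarrow> A \<in> carrier_mat m m \<Longrightarrow> \<Phi> A \<in> carrier_mat n n"
  unfolding linear_map_mat_def by blast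

lemma linear_map_mat_add:
  "linear_map_mat m n \<Phi> \<Longrightarrow> A \<in> carrier_mat m m \<Longrightarrow> B \<in> carrier_mat m m \<Longrightarrow> \<Phi> (A + B) = \<Phi> A + \<Phi> B"
  unfolding linear_map_mat_def by blast

lemma linear_map_mat_smult:
  "linear_map_mat m n \<Phi> \<Longrightarrow> A \<in> carrier_mat m m \<Longrightarrow> \<Phi> (x \<cdot>\<^sub>m A) = x \<cdot>\<^sub>m \<Phi> A"
  unfolding linear_map_mat_def by blast

lemma linear_map_mat_zero:
  assumes lin: "linear_map_mat m n \<Phi>"
  shows "\<Phi> (0\<^sub>m m m) = 0\<^sub>m n n"
proof -
  have "\<Phi> (0\<^sub>m m m) = \<Phi> (0 \<cdot>\<^sub>m 0\<^sub>m m m)" by simp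
  also have "\<dots> = 0 \<cdot>\<^sub>m \<Phi> (0\<^sub>m m m)" by (rule linear_map_mat_smult[OF lin]) simp
  also have "\<dots> = 0\<^sub>m n n"
    using linear_map_mat_carrier[OF lin, of "0\<^sub>m m m"] by (intro eq_matI) auto
  finally show ?thesis .
qed

lemma linear_map_mat_entry_on:
  assumes lin: "linear_map_mat m n \<Phi>" and "a < n" "c < n" "finite S" "S \<subseteq> {..<m} \<times> {..<m}"
  shows "\<Phi> (mat m m (\<lambda>x. if x \<in> S then A $$ x else 0)) $$ (a, c)
    = (\<Sum>x\<in>S. A $$ x * coeff m \<Phi> (fst x) (snd x) a c)"
  using assms(4,5)
proof (induction S rule: finite_induct)
  case empty
  have "mat m m (\<lambda>x. if x \<in> {} then A $$ x else 0) = 0\<^sub>m m m" by (rule eq_matI) auto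
  then show ?case using linear_map_mat_zero[OF lin] assms(2,3) by simp
next
  case (insert x F)
  obtain b d where x: "x = (b, d)" by (cases x)
  let ?AF = "mat m m (\<lambda>y. if y \<in> F then A $$ y else 0)"
  have "mat m m (\<lambda>y. if y \<in> insert x F then A $$ y else 0) = ?AF + A $$ x \<cdot>\<^sub>m ket_bra m b d"
    by (rule eq_matI) (use insert.hyps x in auto)
  moreover have "\<Phi> (?AF + A $$ x \<cdot>\<^sub>m ket_bra m b d) = \<Phi> ?AF + A $$ x \<cdot>\<^sub>m \<Phi> (ket_bra m b d)"
    using linear_map_mat_add[OF lin] linear_map_mat_smult[OF lin] by simp
  moreover have "\<Phi> ?AF \<in> carrier_mat n n" "\<Phi> (ket_bra m b d) \<in> carrier_mat n n"
    using linear_map_mat_carrier[OF lin] by simp_all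
  ultimately show ?case using insert assms(2,3) x by (simp add: coeff_def)
qed

lemma linear_map_mat_coeff_expansion:
  assumes lin: "linear_map_mat m n \<Phi>" and A: "A \<in> carrier_mat m m" and "a < n" "c < n"
  shows "\<Phi> A $$ (a, c) = (\<Sum>b<m. \<Sum>d<m. A $$ (b, d) * coeff m \<Phi> b d a c)"
proof -
  have "mat m m (\<lambda>x. if x \<in> {..<m} \<times> {..<m} then A $$ x else 0) = A"
    by (rule eq_matI) (use A in auto)
  then show ?thesis
    using linear_map_mat_entry_on[OF lin assms(3,4), of "{..<m} \<times> {..<m}" A]
    by (simp add: sum.cartesian_product split_def)
qed

lemma mtrace_ket_bra:
  assumes "b < m" "d < m"
  shows "mtrace (ket_bra m b d) = (if b = d then 1 else 0)"
proof -
  have "mtrace (ket_bra m b d) = (\<Sum>i<m. if i = b \<and> i = d then 1 else 0)"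
    unfolding mtrace_def by (intro sum.cong) auto
  then show ?thesis using assms by (cases "b = d") (auto intro: sum.neutral)
qed

lemma trace_preserving_iff_coeff:
  assumes lin: "linear_map_mat m n \<Phi>"
  shows "trace_preserving m \<Phi> \<longleftrightarrow>
    (\<forall>b<m. \<forall>d<m. (\<Sum>a<n. coeff m \<Phi> b d a a) = (if b = d then 1 else 0))"
proof
  assume tp: "trace_preserving m \<Phi>"
  show "\<forall>b<m. \<forall>d<m. (\<Sum>a<n. coeff m \<Phi> b d a a) = (if b = d then 1 else 0)"
  proof (intro allI impI)
    fix b d assume "b < m" "d < m"
    have "(\<Sum>a<n. coeff m \<Phi> b d a a) = mtrace (\<Phi> (ket_bra m b d))"
      using linear_map_mat_carrier[OF lin ket_bra_carrier, of b d] by (simp add: mtrace_def coeff_def)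
    also have "\<dots> = mtrace (ket_bra m b d)" using tp by (simp add: trace_preserving_def)
    finally show "(\<Sum>a<n. coeff m \<Phi> b d a a) = (if b = d then 1 else 0)"
      using mtrace_ket_bra \<open>b < m\<close> \<open>d < m\<close> by simp
  qed
next
  assume coeff: "\<forall>b<m. \<forall>d<m. (\<Sum>a<n. coeff m \<Phi> b d a a) = (if b = d then 1 else 0)"
  show "trace_preserving m \<Phi>" unfolding trace_preserving_def
  proof
    fix A :: "complex mat" assume A: "A \<in> carrier_mat m m"
    have "mtrace (\<Phi> A) = (\<Sum>a<n. \<Sum>b<m. \<Sum>d<m. A $$ (b, d) * coeff m \<Phi> b d a a)"
      using linear_map_mat_carrier[OF lin A] linear_map_mat_coeff_expansion[OF lin A]
      by (simp add: mtrace_def)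
    also have "\<dots> = (\<Sum>b<m. \<Sum>d<m. A $$ (b, d) * (\<Sum>a<n. coeff m \<Phi> b d a a))"
      by (subst sum.swap) (simp add: sum.swap[of _ "{..<n}"] sum_distrib_left)
    also have "\<dots> = (\<Sum>b<m. A $$ (b, b))"
      using coeff by (simp add: if_distrib[of "\<lambda>x. _ * x"] cong: if_cong)
    also have "\<dots> = mtrace A" using A by (simp add: mtrace_def)
    finally show "mtrace (\<Phi> A) = mtrace A" .
  qed
qed

lemma detection_incoherent_iff_coeff:
  assumes lin: "linear_map_mat m n \<Phi>"
  shows "detection_incoherent m \<Phi> \<longleftrightarrow> (\<forall>a<n. \<forall>b<m. \<forall>d<m. b \<noteq> d \<longrightarrow> coeff m \<Phi> b d a a = 0)"
proof
  assume di: "detection_incoherent m \<Phi>"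
  show "\<forall>a<n. \<forall>b<m. \<forall>d<m. b \<noteq> d \<longrightarrow> coeff m \<Phi> b d a a = 0"
  proof (intro allI impI)
    fix a b d assume "a < n" "b < m" "d < m" "b \<noteq> d"
    have "dephase (ket_bra m b d) = 0\<^sub>m m m"
      using \<open>b \<noteq> d\<close> by (intro eq_matI) (auto simp: ket_bra_def dephase_def)
    then have "dephase (\<Phi> (ket_bra m b d)) = dephase (0\<^sub>m n n)"
      using di linear_map_mat_zero[OF lin] unfolding detection_incoherent_def by (metis ket_bra_carrier)
    then show "coeff m \<Phi> b d a a = 0"
      using linear_map_mat_carrier[OF lin ket_bra_carrier] \<open>a < n\<close>
      by (metis coeff_def carrier_matD dephase_index index_zero_mat(1) zero_carrier_mat)
  qed
next
  assume coeff: "\<forall>a<n. \<forall>b<m. \<forall>d<m. b \<noteq> d \<longrightarrow> coeff m \<Phi> b d a a = 0"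
  show "detection_incoherent m \<Phi>" unfolding detection_incoherent_def
  proof
    fix A :: "complex mat" assume A: "A \<in> carrier_mat m m"
    have dA: "dephase A \<in> carrier_mat m m" using A by simp
    have diag: "\<Phi> A $$ (i, i) = \<Phi> (dephase A) $$ (i, i)" if "i < n" for i
      unfolding linear_map_mat_coeff_expansion[OF lin A that that]
        linear_map_mat_coeff_expansion[OF lin dA that that]
      using coeff that A by (intro sum.cong refl) auto
    show "dephase (\<Phi> A) = dephase (\<Phi> (dephase A))"
      using linear_map_mat_carrier[OF lin A] linear_map_mat_carrier[OF lin dA] diag
      by (intro eq_matI) auto
  qed
qed

lemma creation_incoherent_iff_coeff:
  assumes lin: "linear_map_mat m n \<Phi>"
  shows "creation_incoherent m \<Phi> \<longleftrightarrow> (\<forall>a<m. \<forall>b<n. \<forall>c<n. b \<noteq> c \<longrightarrow> coeff m \<Phi> a a b c = 0)"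
proof
  assume ci: "creation_incoherent m \<Phi>"
  show "\<forall>a<m. \<forall>b<n. \<forall>c<n. b \<noteq> c \<longrightarrow> coeff m \<Phi> a a b c = 0"
  proof (intro allI impI)
    fix a b c assume "a < m" "b < n" "c < n" "b \<noteq> c"
    have "dephase (ket_bra m a a) = ket_bra m a a" by (rule eq_matI) auto
    then have "\<Phi> (ket_bra m a a) = dephase (\<Phi> (ket_bra m a a))"
      using ci unfolding creation_incoherent_def by (metis ket_bra_carrier)
    then show "coeff m \<Phi> a a b c = 0"
      using linear_map_mat_carrier[OF lin ket_bra_carrier] \<open>b < n\<close> \<open>c < n\<close> \<open>b \<noteq> c\<close>
      by (metis coeff_def carrier_matD dephase_index)
  qed
next
  assume coeff: "\<forall>a<m. \<forall>b<n. \<forall>c<n. b \<noteq> c \<longrightarrow> coeff m \<Phi> a a b c = 0"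
  show "creation_incoherent m \<Phi>" unfolding creation_incoherent_def
  proof
    fix A :: "complex mat" assume A: "A \<in> carrier_mat m m"
    have dA: "dephase A \<in> carrier_mat m m" using A by simp
    have offdiag: "\<Phi> (dephase A) $$ (i, j) = 0" if "i < n" "j < n" "i \<noteq> j" for i j
      unfolding linear_map_mat_coeff_expansion[OF lin dA that(1,2)]
      using coeff that A by (intro sum.neutral ballI) auto
    show "\<Phi> (dephase A) = dephase (\<Phi> (dephase A))"
      using linear_map_mat_carrier[OF lin dA] offdiag by (intro eq_matI) auto
  qed
qed

lemma detection_creation_incoherent_iff:
  "detection_creation_incoherent m \<Phi> \<longleftrightarrow> detection_incoherent m \<Phi> \<and> creation_incoherent m \<Phi>"
  unfolding detection_creation_incoherent_def detection_incoherent_def creation_incoherent_def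
  by (metis dephase_idem dephase_carrier)

section \<open>Kraus decomposition and the Choi matrix\<close>

lemma index_pair_less: "b < m \<Longrightarrow> a < n \<Longrightarrow> b * n + a < m * (n::nat)"
  using mult_le_mono1[of "Suc b" m n] by simp

lemma index_pair_div_mod:
  assumes "a < (n::nat)"
  shows "(b * n + a) div n = b" "(b * n + a) mod n = a"
  using assms by simp_all

lemma sum_lessThan_mult: "(\<Sum>p<k * n. f p) = (\<Sum>x<k. \<Sum>a<n. f (x * n + a))" for k n :: nat
proof -
  have "(\<Sum>p<k * n. f p) = (\<Sum>x<k. sum f {x * n..<x * n + n})"
    by (rule sum.nat_group[symmetric])
  also have "\<dots> = (\<Sum>x<k. \<Sum>a<n. f (x * n + a))"
    by (simp add: sum.atLeastLessThan_shift_0 atLeast0LessThan comp_def)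
  finally show ?thesis .
qed

lemma sum_lessThan_mult_select:
  fixes k m x :: nat
  assumes "x < k"
  shows "(\<Sum>P<k * m. if P div m = x then h P else 0) = (\<Sum>b<m. h (x * m + b))"
proof -
  have "(\<Sum>P<k * m. if P div m = x then h P else 0) = (\<Sum>y<k. \<Sum>b<m. if y = x then h (y * m + b) else 0)"
    unfolding sum_lessThan_mult by (intro sum.cong refl) (simp add: index_pair_div_mod)
  also have "\<dots> = (\<Sum>y<k. if y = x then (\<Sum>b<m. h (y * m + b)) else 0)"
    by (intro sum.cong refl) simp
  finally show ?thesis using assms by simp
qed

lemma ampliation_carrier: "ampliation k m n \<Phi> X \<in> carrier_mat (k * n) (k * n)"
  unfolding ampliation_def by simp

text \<open>Entry \<open>(p, P)\<close> of \<open>id\<^sub>k \<otimes> K\<close> for an \<open>n \<times> m\<close> matrix \<open>K\<close>, with the block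
  indexing of \<open>ampliation\<close>: \<open>p = x n + a\<close> and \<open>P = y m + b\<close>.\<close>

definition kron_id_entry :: "nat \<Rightarrow> nat \<Rightarrow> complex mat \<Rightarrow> nat \<Rightarrow> nat \<Rightarrow> complex" where
  "kron_id_entry m n K p P = (if p div n = P div m then K $$ (p mod n, P mod m) else 0)"

lemma ampliation_kraus_entry:
  assumes lin: "linear_map_mat m n \<Phi>"
    and K: "\<forall>a<n. \<forall>b<m. \<forall>c<n. \<forall>d<m. coeff m \<Phi> b d a c = (\<Sum>i<r. K i $$ (a, b) * cnj (K i $$ (c, d)))"
    and p: "p < k * n" and q: "q < k * n"
  shows "ampliation k m n \<Phi> X $$ (p, q) = (\<Sum>i<r. \<Sum>P<k * m. \<Sum>Q<k * m.
    kron_id_entry m n (K i) p P * X $$ (P, Q) * cnj (kron_id_entry m n (K i) q Q))"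
proof -
  define x y a c where "x = p div n" and "y = q div n" and "a = p mod n" and "c = q mod n"
  have "n > 0" using p by (cases n) auto
  then have xy: "x < k" "y < k" "a < n" "c < n"
    using p q unfolding x_def y_def a_def c_def by (auto simp: less_mult_imp_div_less)
  define Y where "Y = mat m m (\<lambda>(b, d). X $$ (x * m + b, y * m + d))"
  have "ampliation k m n \<Phi> X $$ (p, q) = \<Phi> Y $$ (a, c)"
    unfolding ampliation_def Y_def x_def y_def a_def c_def using p q by simp
  also have "\<dots> = (\<Sum>b<m. \<Sum>d<m. \<Sum>i<r. K i $$ (a, b) * X $$ (x * m + b, y * m + d) * cnj (K i $$ (c, d)))"
    using linear_map_mat_coeff_expansion[OF lin _ xy(3,4), of Y] K xy
    by (simp add: Y_def sum_distrib_left mult_ac)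
  also have "\<dots> = (\<Sum>i<r. \<Sum>b<m. \<Sum>d<m. K i $$ (a, b) * X $$ (x * m + b, y * m + d) * cnj (K i $$ (c, d)))"
    by (subst sum.swap) (intro sum.cong refl sum.swap)
  also have "\<dots> = (\<Sum>i<r. \<Sum>P<k * m. \<Sum>Q<k * m.
      kron_id_entry m n (K i) p P * X $$ (P, Q) * cnj (kron_id_entry m n (K i) q Q))"
  proof (rule sum.cong[OF refl])
    fix i
    have "(\<Sum>P<k * m. \<Sum>Q<k * m. kron_id_entry m n (K i) p P * X $$ (P, Q) * cnj (kron_id_entry m n (K i) q Q))
      = (\<Sum>P<k * m. if P div m = x then (\<Sum>Q<k * m. if Q div m = y then
          K i $$ (a, P mod m) * X $$ (P, Q) * cnj (K i $$ (c, Q mod m)) else 0) else 0)"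
      unfolding kron_id_entry_def x_def y_def a_def c_def by (intro sum.cong refl) (auto intro!: sum.cong)
    also have "\<dots> = (\<Sum>b<m. \<Sum>d<m. K i $$ (a, b) * X $$ (x * m + b, y * m + d) * cnj (K i $$ (c, d)))"
      using xy by (simp add: sum_lessThan_mult_select)
    finally show "(\<Sum>b<m. \<Sum>d<m. K i $$ (a, b) * X $$ (x * m + b, y * m + d) * cnj (K i $$ (c, d)))
      = (\<Sum>P<k * m. \<Sum>Q<k * m. kron_id_entry m n (K i) p P * X $$ (P, Q) * cnj (kron_id_entry m n (K i) q Q))"
      by simp
  qed
  finally show ?thesis .
qed

lemma kraus_imp_completely_positive:
  assumes lin: "linear_map_mat m n \<Phi>"
    and K: "\<forall>a<n. \<forall>b<m. \<forall>c<n. \<forall>d<m. coeff m \<Phi> b d a c = (\<Sum>i<r. K i $$ (a, b) * cnj (K i $$ (c, d)))"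
  shows "completely_positive m n \<Phi>"
  unfolding completely_positive_def
proof (intro allI impI)
  fix k X assume X: "psd (k * m) X"
  then have "psd_kernel (k * m) (\<lambda>P Q. X $$ (P, Q))"
    using psd_iff_psd_kernel by (auto simp: psd_def)
  moreover have "quad_form (k * n) (\<lambda>p q. \<Sum>i<r. \<Sum>P<k * m. \<Sum>Q<k * m.
      kron_id_entry m n (K i) p P * X $$ (P, Q) * cnj (kron_id_entry m n (K i) q Q)) v
    = (\<Sum>i<r. quad_form (k * m) (\<lambda>P Q. X $$ (P, Q)) (\<lambda>P. \<Sum>p<k * n. cnj (kron_id_entry m n (K i) p P) * v p))"
    for v
    unfolding quad_form_sum[of "k * n" "\<lambda>i p q. \<Sum>P<k * m. \<Sum>Q<k * m.
      kron_id_entry m n (K i) p P * X $$ (P, Q) * cnj (kron_id_entry m n (K i) q Q)"]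
      quad_form_congruence ..
  ultimately have "psd_kernel (k * n) (\<lambda>p q. \<Sum>i<r. \<Sum>P<k * m. \<Sum>Q<k * m.
      kron_id_entry m n (K i) p P * X $$ (P, Q) * cnj (kron_id_entry m n (K i) q Q))"
    unfolding psd_kernel_def by (simp add: sum_nonneg)
  then have "psd_kernel (k * n) (\<lambda>p q. ampliation k m n \<Phi> X $$ (p, q))"
    by (rule psd_kernel_cong) (simp add: ampliation_kraus_entry[OF lin K])
  then show "psd (k * n) (ampliation k m n \<Phi> X)"
    by (simp add: psd_iff_psd_kernel ampliation_carrier)
qed

text \<open>The projector onto \<open>\<Sum>\<^sub>b |b\<rangle> \<otimes> |b\<rangle>\<close>, the index \<open>b m + b'\<close> standing for
  \<open>|b\<rangle> \<otimes> |b'\<rangle>\<close>.\<close>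

definition max_entangled :: "nat \<Rightarrow> complex mat" where
  "max_entangled m = mat (m * m) (m * m)
     (\<lambda>(P, Q). if P div m = P mod m \<and> Q div m = Q mod m then 1 else 0)"

lemma psd_max_entangled: "psd (m * m) (max_entangled m)"
proof -
  define e where "e P = (if P div m = P mod m then 1 else 0 :: complex)" for P
  have "psd_kernel (m * m) (\<lambda>P Q. e P * cnj (e Q))" by (rule psd_kernel_rank_one)
  then have "psd_kernel (m * m) (\<lambda>P Q. max_entangled m $$ (P, Q))"
    by (rule psd_kernel_cong) (simp add: max_entangled_def e_def)
  then show ?thesis by (simp add: psd_iff_psd_kernel max_entangled_def)
qed

lemma ampliation_max_entangled:
  assumes "p < m * n" "q < m * n"
  shows "ampliation m m n \<Phi> (max_entangled m) $$ (p, q)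
    = coeff m \<Phi> (p div n) (q div n) (p mod n) (q mod n)"
proof -
  have "p div n < m" "q div n < m" using assms by (auto simp: less_mult_imp_div_less)
  then have "mat m m (\<lambda>(b, d). max_entangled m $$ (p div n * m + b, q div n * m + d))
      = ket_bra m (p div n) (q div n)"
    by (intro eq_matI) (auto simp: max_entangled_def index_pair_less)
  then show ?thesis using assms unfolding ampliation_def coeff_def by simp
qed

lemma completely_positive_choi:
  assumes "completely_positive m n \<Phi>"
  shows "psd_kernel (m * n) (\<lambda>p q. coeff m \<Phi> (p div n) (q div n) (p mod n) (q mod n))"
proof -
  have "psd (m * n) (ampliation m m n \<Phi> (max_entangled m))"
    using assms psd_max_entangled unfolding completely_positive_def by blast
  then have "psd_kernel (m * n) (\<lambda>p q. ampliation m m n \<Phi> (max_entangled m) $$ (p, q))"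
    by (simp add: psd_iff_psd_kernel ampliation_carrier)
  then show ?thesis by (rule psd_kernel_cong) (simp add: ampliation_max_entangled)
qed

lemma completely_positive_imp_kraus:
  assumes "completely_positive m n \<Phi>"
  shows "\<exists>(r::nat) (K :: nat \<Rightarrow> complex mat). (\<forall>i<r. K i \<in> carrier_mat n m) \<and>
    (\<forall>a<n. \<forall>b<m. \<forall>c<n. \<forall>d<m. coeff m \<Phi> b d a c = (\<Sum>i<r. K i $$ (a, b) * cnj (K i $$ (c, d))))"
proof -
  obtain r :: nat and w where w: "\<forall>p<m * n. \<forall>q<m * n.
      coeff m \<Phi> (p div n) (q div n) (p mod n) (q mod n) = (\<Sum>k<r. w k p * cnj (w k q))"
    using psd_kernel_gram[OF completely_positive_choi[OF assms]] by blast
  define K where "K i = mat n m (\<lambda>(a, b). w i (b * n + a))" for i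
  have "coeff m \<Phi> b d a c = (\<Sum>i<r. K i $$ (a, b) * cnj (K i $$ (c, d)))"
    if "a < n" "b < m" "c < n" "d < m" for a b c d
  proof -
    have "coeff m \<Phi> b d a c
        = coeff m \<Phi> ((b * n + a) div n) ((d * n + c) div n) ((b * n + a) mod n) ((d * n + c) mod n)"
      using that by (simp add: index_pair_div_mod)
    also have "\<dots> = (\<Sum>k<r. w k (b * n + a) * cnj (w k (d * n + c)))"
      by (rule w[rule_format, OF index_pair_less[OF that(2,1)] index_pair_less[OF that(4,3)]])
    finally show ?thesis using that by (simp add: K_def)
  qed
  then show ?thesis by (intro exI[of _ r] exI[of _ K]) (auto simp: K_def)
qed

lemma completely_positive_iff_kraus:
  assumes "linear_map_mat m n \<Phi>"
  shows "completely_positive m n \<Phi> \<longleftrightarrow>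
    (\<exists>(r::nat) (K :: nat \<Rightarrow> complex mat). (\<forall>i<r. K i \<in> carrier_mat n m) \<and>
      (\<forall>a<n. \<forall>b<m. \<forall>c<n. \<forall>d<m. coeff m \<Phi> b d a c = (\<Sum>i<r. K i $$ (a, b) * cnj (K i $$ (c, d)))))"
proof
  assume "\<exists>(r::nat) (K :: nat \<Rightarrow> complex mat). (\<forall>i<r. K i \<in> carrier_mat n m) \<and>
    (\<forall>a<n. \<forall>b<m. \<forall>c<n. \<forall>d<m. coeff m \<Phi> b d a c = (\<Sum>i<r. K i $$ (a, b) * cnj (K i $$ (c, d))))"
  then obtain r :: nat and K where
    "\<forall>a<n. \<forall>b<m. \<forall>c<n. \<forall>d<m. coeff m \<Phi> b d a c = (\<Sum>i<r. K i $$ (a, b) * cnj (K i $$ (c, d)))"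
    by blast
  then show "completely_positive m n \<Phi>" by (rule kraus_imp_completely_positive[OF assms])
qed (rule completely_positive_imp_kraus)

lemma completely_positive_coeff_diag_nonneg:
  assumes "completely_positive m n \<Phi>" "a < n" "b < m"
  shows "0 \<le> coeff m \<Phi> b b a a"
  using psd_kernel_diag_nonneg[OF completely_positive_choi[OF assms(1)] index_pair_less[OF assms(3,2)]]
    assms by simp

section \<open>Incoherent quantum operations\<close>

lemma completely_positive_coeff_diag_real:
  assumes "completely_positive m n \<Phi>" "a < n" "b < m"
  shows "complex_of_real (Re (coeff m \<Phi> b b a a)) = coeff m \<Phi> b b a a"
  using completely_positive_coeff_diag_nonneg[OF assms]
  by (simp add: less_eq_complex_def complex_eq_iff)

lemma trace_preserving_cond_prob:
  assumes lin: "linear_map_mat m n \<Phi>" and cp: "completely_positive m n \<Phi>"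
    and tp: "trace_preserving m \<Phi>"
  shows "cond_prob n m (\<lambda>a b. Re (coeff m \<Phi> b b a a))"
  unfolding cond_prob_def
proof (intro conjI allI impI)
  fix a b assume "a < n" "b < m"
  then show "0 \<le> Re (coeff m \<Phi> b b a a)"
    using completely_positive_coeff_diag_nonneg[OF cp] by (simp add: less_eq_complex_def)
next
  fix b assume "b < m"
  then show "(\<Sum>a<n. Re (coeff m \<Phi> b b a a)) = 1"
    using tp trace_preserving_iff_coeff[OF lin] by (simp flip: Re_sum)
qed

lemma quantum_operation_detection_incoherent_iff:
  assumes lin: "linear_map_mat m n \<Phi>" and cp: "completely_positive m n \<Phi>"
  shows "quantum_operation m n \<Phi> \<and> detection_incoherent m \<Phi> \<longleftrightarrow>
    (\<exists>p. cond_prob n m p \<and> (\<forall>a<n. \<forall>b<m. \<forall>d<m.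
      coeff m \<Phi> b d a a = (if b = d then complex_of_real (p a b) else 0)))"
proof
  assume "quantum_operation m n \<Phi> \<and> detection_incoherent m \<Phi>"
  then have tp: "trace_preserving m \<Phi>" and di: "detection_incoherent m \<Phi>"
    by (simp_all add: quantum_operation_def)
  show "\<exists>p. cond_prob n m p \<and> (\<forall>a<n. \<forall>b<m. \<forall>d<m.
      coeff m \<Phi> b d a a = (if b = d then complex_of_real (p a b) else 0))"
  proof (intro exI conjI)
    show "cond_prob n m (\<lambda>a b. Re (coeff m \<Phi> b b a a))"
      using trace_preserving_cond_prob[OF lin cp tp] .
    show "\<forall>a<n. \<forall>b<m. \<forall>d<m. coeff m \<Phi> b d a a
        = (if b = d then complex_of_real (Re (coeff m \<Phi> b b a a)) else 0)"
      using di detection_incoherent_iff_coeff[OF lin] completely_positive_coeff_diag_real[OF cp]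
      by auto
  qed
next
  assume "\<exists>p. cond_prob n m p \<and> (\<forall>a<n. \<forall>b<m. \<forall>d<m.
      coeff m \<Phi> b d a a = (if b = d then complex_of_real (p a b) else 0))"
  then obtain p where p: "cond_prob n m p"
    and coeff: "\<forall>a<n. \<forall>b<m. \<forall>d<m. coeff m \<Phi> b d a a = (if b = d then complex_of_real (p a b) else 0)"
    by blast
  have "(\<Sum>a<n. coeff m \<Phi> b d a a) = (if b = d then 1 else 0)" if "b < m" "d < m" for b d
    using p coeff that unfolding cond_prob_def by (simp flip: of_real_sum)
  then have "trace_preserving m \<Phi>" using trace_preserving_iff_coeff[OF lin] by blast
  moreover have "detection_incoherent m \<Phi>" using coeff detection_incoherent_iff_coeff[OF lin] by auto
  ultimately show "quantum_operation m n \<Phi> \<and> detection_incoherent m \<Phi>"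
    using lin cp by (simp add: quantum_operation_def)
qed

lemma quantum_operation_creation_incoherent_iff:
  assumes lin: "linear_map_mat m n \<Phi>" and cp: "completely_positive m n \<Phi>"
  shows "quantum_operation m n \<Phi> \<and> creation_incoherent m \<Phi> \<longleftrightarrow>
    (\<exists>p. cond_prob n m p \<and>
      (\<forall>a<m. \<forall>b<n. \<forall>c<n. coeff m \<Phi> a a b c = (if b = c then complex_of_real (p b a) else 0)) \<and>
      (\<forall>b<m. \<forall>d<m. (\<Sum>a<n. coeff m \<Phi> b d a a) = (if b = d then 1 else 0)))"
proof
  assume "quantum_operation m n \<Phi> \<and> creation_incoherent m \<Phi>"
  then have tp: "trace_preserving m \<Phi>" and ci: "creation_incoherent m \<Phi>"
    by (simp_all add: quantum_operation_def)
  show "\<exists>p. cond_prob n m p \<and>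
      (\<forall>a<m. \<forall>b<n. \<forall>c<n. coeff m \<Phi> a a b c = (if b = c then complex_of_real (p b a) else 0)) \<and>
      (\<forall>b<m. \<forall>d<m. (\<Sum>a<n. coeff m \<Phi> b d a a) = (if b = d then 1 else 0))"
  proof (intro exI conjI)
    show "cond_prob n m (\<lambda>a b. Re (coeff m \<Phi> b b a a))"
      using trace_preserving_cond_prob[OF lin cp tp] .
    show "\<forall>a<m. \<forall>b<n. \<forall>c<n. coeff m \<Phi> a a b c
        = (if b = c then complex_of_real (Re (coeff m \<Phi> a a b b)) else 0)"
      using ci creation_incoherent_iff_coeff[OF lin] completely_positive_coeff_diag_real[OF cp]
      by auto
    show "\<forall>b<m. \<forall>d<m. (\<Sum>a<n. coeff m \<Phi> b d a a) = (if b = d then 1 else 0)"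
      using tp trace_preserving_iff_coeff[OF lin] by blast
  qed
next
  assume "\<exists>p. cond_prob n m p \<and>
      (\<forall>a<m. \<forall>b<n. \<forall>c<n. coeff m \<Phi> a a b c = (if b = c then complex_of_real (p b a) else 0)) \<and>
      (\<forall>b<m. \<forall>d<m. (\<Sum>a<n. coeff m \<Phi> b d a a) = (if b = d then 1 else 0))"
  then have "trace_preserving m \<Phi>" and "creation_incoherent m \<Phi>"
    using trace_preserving_iff_coeff[OF lin] creation_incoherent_iff_coeff[OF lin] by auto
  then show "quantum_operation m n \<Phi> \<and> creation_incoherent m \<Phi>"
    using lin cp by (simp add: quantum_operation_def)
qed

lemma quantum_operation_detection_creation_incoherent_iff:
  assumes lin: "linear_map_mat m n \<Phi>" and cp: "completely_positive m n \<Phi>"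
  shows "quantum_operation m n \<Phi> \<and> detection_creation_incoherent m \<Phi> \<longleftrightarrow>
    (\<exists>p q. cond_prob n m p \<and> cond_prob n m q \<and>
      (\<forall>a<n. \<forall>b<m. \<forall>d<m. coeff m \<Phi> b d a a = (if b = d then complex_of_real (p a b) else 0)) \<and>
      (\<forall>a<m. \<forall>b<n. \<forall>c<n. coeff m \<Phi> a a b c = (if b = c then complex_of_real (q b a) else 0)))"
proof
  assume "quantum_operation m n \<Phi> \<and> detection_creation_incoherent m \<Phi>"
  then have di: "quantum_operation m n \<Phi> \<and> detection_incoherent m \<Phi>"
    and ci: "quantum_operation m n \<Phi> \<and> creation_incoherent m \<Phi>"
    by (simp_all add: detection_creation_incoherent_iff)
  obtain p where "cond_prob n m p"
    "\<forall>a<n. \<forall>b<m. \<forall>d<m. coeff m \<Phi> b d a a = (if b = d then complex_of_real (p a b) else 0)"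
    using iffD1[OF quantum_operation_detection_incoherent_iff[OF lin cp] di] by blast
  moreover obtain q where "cond_prob n m q"
    "\<forall>a<m. \<forall>b<n. \<forall>c<n. coeff m \<Phi> a a b c = (if b = c then complex_of_real (q b a) else 0)"
    using iffD1[OF quantum_operation_creation_incoherent_iff[OF lin cp] ci] by blast
  ultimately show "\<exists>p q. cond_prob n m p \<and> cond_prob n m q \<and>
      (\<forall>a<n. \<forall>b<m. \<forall>d<m. coeff m \<Phi> b d a a = (if b = d then complex_of_real (p a b) else 0)) \<and>
      (\<forall>a<m. \<forall>b<n. \<forall>c<n. coeff m \<Phi> a a b c = (if b = c then complex_of_real (q b a) else 0))"
    by blast
next
  assume "\<exists>p q. cond_prob n m p \<and> cond_prob n m q \<and>
      (\<forall>a<n. \<forall>b<m. \<forall>d<m. coeff m \<Phi> b d a a = (if b = d then complex_of_real (p a b) else 0)) \<and>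
      (\<forall>a<m. \<forall>b<n. \<forall>c<n. coeff m \<Phi> a a b c = (if b = c then complex_of_real (q b a) else 0))"
  then obtain p q where "cond_prob n m p"
    "\<forall>a<n. \<forall>b<m. \<forall>d<m. coeff m \<Phi> b d a a = (if b = d then complex_of_real (p a b) else 0)"
    and q: "\<forall>a<m. \<forall>b<n. \<forall>c<n. coeff m \<Phi> a a b c = (if b = c then complex_of_real (q b a) else 0)"
    by blast
  then have "quantum_operation m n \<Phi> \<and> detection_incoherent m \<Phi>"
    using quantum_operation_detection_incoherent_iff[OF lin cp] by blast
  moreover have "creation_incoherent m \<Phi>"
    using q creation_incoherent_iff_coeff[OF lin] by auto
  ultimately show "quantum_operation m n \<Phi> \<and> detection_creation_incoherent m \<Phi>"
    by (simp add: detection_creation_incoherent_iff)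
qed

theorem proposition15:
  fixes m n :: nat and \<Phi> :: "complex mat \<Rightarrow> complex mat"
  assumes lin: "linear_map_mat m n \<Phi>"
  shows "(completely_positive m n \<Phi> \<longleftrightarrow>
           (\<exists>(r::nat) (K :: nat \<Rightarrow> complex mat). (\<forall>i < r. K i \<in> carrier_mat n m) \<and>
              (\<forall>a < n. \<forall>b < m. \<forall>c < n. \<forall>d < m.
                 coeff m \<Phi> b d a c = (\<Sum>i < r. K i $$ (a, b) * cnj (K i $$ (c, d))))))
       \<and> (completely_positive m n \<Phi> \<longrightarrow>
           ((quantum_operation m n \<Phi> \<and> detection_incoherent m \<Phi> \<longleftrightarrow>
              (\<exists>p. cond_prob n m p \<and>
                 (\<forall>a < n. \<forall>b < m. \<forall>d < m.
                    coeff m \<Phi> b d a a = (if b = d then complex_of_real (p a b) else 0))))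
            \<and> (quantum_operation m n \<Phi> \<and> creation_incoherent m \<Phi> \<longleftrightarrow>
              (\<exists>p. cond_prob n m p \<and>
                 (\<forall>a < m. \<forall>b < n. \<forall>c < n.
                    coeff m \<Phi> a a b c = (if b = c then complex_of_real (p b a) else 0)) \<and>
                 (\<forall>b < m. \<forall>d < m. (\<Sum>a < n. coeff m \<Phi> b d a a) = (if b = d then 1 else 0))))
            \<and> (quantum_operation m n \<Phi> \<and> detection_creation_incoherent m \<Phi> \<longleftrightarrow>
              (\<exists>p q. cond_prob n m p \<and> cond_prob n m q \<and>
                 (\<forall>a < n. \<forall>b < m. \<forall>d < m.
                    coeff m \<Phi> b d a a = (if b = d then complex_of_real (p a b) else 0)) \<and>
                 (\<forall>a < m. \<forall>b < n. \<forall>c < n.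
                    coeff m \<Phi> a a b c = (if b = c then complex_of_real (q b a) else 0))))))"
  by (intro conjI impI completely_positive_iff_kraus[OF lin]
      quantum_operation_detection_incoherent_iff[OF lin]
      quantum_operation_creation_incoherent_iff[OF lin]
      quantum_operation_detection_creation_incoherent_iff[OF lin])

end
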